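(* Let $\alpha\in\mathbb{R}$, let $p$ be a positive integer, $b\in\mathbb{R}$, and let $f$ be defined only on ${}_{b}\mathbb{N}$. Then for all $t\in{}_{b-2p+1}\mathbb{N}$, $${}_{b-p+1}\nabla^{-\alpha}\,{}_{\ominus}\Delta^p f(t)={}_{\ominus}\Delta^p\,{}_{b-p+1}\nabla^{-\alpha}f(t)-\sum_{k=0}^{p-1}\frac{(b-p+1-t)^{\overline{\alpha-p+k}}}{\Gamma(\alpha+k-p+1)}\,{}_{\ominus}\Delta^k f(b-p+1).$$
   Context: Notation: ${}_{c}\mathbb{N}=\{c,c-1,\dots\}$, $\rho(t)=t-1$, $\Delta g(t)=g(t+1)-g(t)$, ${}_{\ominus}\Delta^m g=(-1)^m\Delta^m g$. Rising factorial: $t^{\overline{\beta}}=\Gamma(t+\beta)/\Gamma(t)$ with $0^{\overline{\beta}}=0$; the reciprocal of $\Gamma$ at a pole is $0$. For $\gamma>0$ and endpoint $c$, the nabla right fractional sum is ${}_{c}\nabla^{-\gamma}g(t)=\frac{1}{\Gamma(\gamma)}\sum_{s=t}^{c-1}(s-\rho(t))^{\overline{\gamma-1}}g(s)$, a sum with upper limit smaller than lower limit being $0$. For $\beta>0$ let $n=[\beta]+1$ with $[\beta]$ the greatest integer strictly less than $\beta$; the nabla right fractional difference is ${}_{c}\nabla^{\beta}g(t)=(-1)^n\Delta^n\,{}_{c}\nabla^{-(n-\beta)}g(t)$ (order-$0$ operator = identity). For $\alpha<0$, ${}_{c}\nabla^{-\alpha}$ denotes the nabla right fractional difference of order $-\alpha$;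 for $\alpha=0$ the identity. *)

theory Defs
  imports "HOL-Analysis.Analysis"
begin

definition latt :: "real \<Rightarrow> real set" where
  "latt c = {c - real j | j. True}"

definition rising :: "real \<Rightarrow> real \<Rightarrow> real" where
  "rising t \<beta> = (if t = 0 then 0 else Gamma (t + \<beta>) / Gamma t)"

definition fdiff :: "(real \<Rightarrow> real) \<Rightarrow> real \<Rightarrow> real" where
  "fdiff g t = g (t + 1) - g t"

definition odiff :: "nat \<Rightarrow> (real \<Rightarrow> real) \<Rightarrow> real \<Rightarrow> real" where
  "odiff m g t = (-1) ^ m * (fdiff ^^ m) g t"

text \<open>Nabla right fractional sum of order gamma > 0 with endpoint c:
  (1/Gamma gamma) * sum_{s=t}^{c-1} (s - rho t)^(gamma-1) g(s),
  with s = t + j, j = 0 .. c-1-t (empty if c-1 < t); here s - rho(t) = j + 1.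
  The reciprocal of Gamma is rGamma (0 at poles).\<close>
definition nsum :: "real \<Rightarrow> real \<Rightarrow> (real \<Rightarrow> real) \<Rightarrow> real \<Rightarrow> real" where
  "nsum c \<gamma> g t = rGamma \<gamma> * (\<Sum>j<nat \<lfloor>c - t\<rfloor>. rising (real j + 1) (\<gamma> - 1) * g (t + real j))"

text \<open>Nabla right fractional difference of order beta > 0 with endpoint c:
  n = [beta] + 1 = ceiling beta, result (-1)^n Delta^n (c nabla^(-(n-beta)) g),
  the order-0 operator being the identity.\<close>
definition ndiff :: "real \<Rightarrow> real \<Rightarrow> (real \<Rightarrow> real) \<Rightarrow> real \<Rightarrow> real" where
  "ndiff c \<beta> g = (let n = nat \<lceil>\<beta>\<rceil> in
      odiff n (if real n - \<beta> = 0 then g else nsum c (real n - \<beta>) g))"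

definition nabla_op :: "real \<Rightarrow> real \<Rightarrow> (real \<Rightarrow> real) \<Rightarrow> real \<Rightarrow> real" where
  "nabla_op c \<alpha> g = (if \<alpha> > 0 then nsum c \<alpha> g else if \<alpha> = 0 then g else ndiff c (- \<alpha>) g)"

end

theory Submission
  imports Defs
begin

(* For every order a that is not a non-positive integer, the operator
   nabla_op c a acts on g as the weighted tail sum
     wsum c a g x = sum_{j < c - x} w a j * g (x + j),   w a j = pochhammer a j / j!,
   and at a = -n it is simply the n-th ominus-difference.  The weights satisfy the
   Pascal rule  w a (j+1) - w a j = w (a-1) (j+1), which gives two facts:
   (1) odiff i (wsum c a g) = wsum c (a - i) g  (differences lower the order), and
   (2) an iterated summation by parts, moving odiff p from f onto the weights at
       the cost of p boundary terms at the endpoint.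
   Combining (1) and (2) yields the theorem for non-integral orders once the boundary
   weights are rewritten as rising factorials times rGamma; for orders -n it reduces
   to the commutation of iterated differences, the boundary terms vanishing because
   rGamma is zero at the poles. *)

lemma odiff_0 [simp]: "odiff 0 g = g"
  by (simp add: odiff_def fun_eq_iff)

lemma odiff_Suc: "odiff (Suc m) g x = odiff m g x - odiff m g (x + 1)"
  by (simp add: odiff_def fdiff_def algebra_simps)

lemma odiff_add: "odiff (m + n) g = odiff m (odiff n g)"
proof -
  have linear: "(fdiff ^^ m) (\<lambda>x. c * h x) = (\<lambda>x. c * (fdiff ^^ m) h x)" for c h
    by (induction m) (auto simp: fdiff_def algebra_simps)
  show ?thesis
    unfolding odiff_def by (simp add: linear funpow_add power_add mult.assoc)
qed

lemma odiff_commute: "odiff m (odiff n g) = odiff n (odiff m g)"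
  by (metis odiff_add add.commute)

text \<open>The weight of g(x + j) in the fractional sum of order a (a generalised
  binomial coefficient).\<close>
definition weight :: "real \<Rightarrow> nat \<Rightarrow> real" where
  "weight a j = pochhammer a j / fact j"

lemma weight_0 [simp]: "weight a 0 = 1"
  by (simp add: weight_def)

lemma weight_pascal: "weight a (Suc j) - weight a j = weight (a - 1) (Suc j)"
proof -
  define P where "P = pochhammer a j"
  define F where "F = (fact j :: real)"
  have "F > 0"
    by (simp add: F_def)
  have "weight a (Suc j) = P * (a + real j) / ((real j + 1) * F)"
    by (simp add: weight_def pochhammer_Suc P_def F_def)
  moreover have "weight (a - 1) (Suc j) = (a - 1) * P / ((real j + 1) * F)"
    by (simp add: weight_def pochhammer_rec P_def F_def)
  moreover have "weight a j = P * (real j + 1) / ((real j + 1) * F)"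
    using \<open>F > 0\<close> by (simp add: weight_def P_def F_def)
  ultimately show ?thesis
    by (simp add: diff_divide_distrib[symmetric] algebra_simps)
qed

lemma rGamma_rising_weight:
  assumes "a \<notin> \<int>\<^sub>\<le>\<^sub>0 \<or> pochhammer a n = 0"
  shows "rGamma a * rising (real n + 1) (a - 1) = weight a n"
proof (cases "a \<in> \<int>\<^sub>\<le>\<^sub>0")
  case True
  then show ?thesis using assms by (simp add: weight_def rGamma_eq_zero_iff)
next
  case False
  have "rising (real n + 1) (a - 1) = Gamma (a + real n) / Gamma (1 + real n)"
    by (simp add: rising_def algebra_simps)
  also have "Gamma (1 + real n) = fact n"
    using Gamma_fact[of n] by simp
  also have "Gamma (a + real n) = pochhammer a n * Gamma a"
    using pochhammer_Gamma[OF False, of n] False by (simp add: Gamma_eq_zero_iff)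
  finally show ?thesis
    using False by (simp add: weight_def rGamma_inverse_Gamma Gamma_eq_zero_iff field_simps)
qed

text \<open>One summation by parts, driven by the Pascal rule of the weights.\<close>
lemma sum_by_parts_once:
  "(\<Sum>s<Suc n. weight a s * (f (t + real s) - f (t + real s + 1))) =
   (\<Sum>s<Suc n. weight (a - 1) s * f (t + real s)) - weight a n * f (t + real (Suc n))"
proof (induction n)
  case (Suc n)
  then show ?case
    using weight_pascal[of a n] by (simp add: algebra_simps)
qed simp

lemma sum_by_parts:
  "(\<Sum>s<Suc n. weight a s * odiff p f (t + real s)) =
   (\<Sum>s<Suc n. weight (a - real p) s * f (t + real s))
   - (\<Sum>k<p. weight (a - real p + real k + 1) n * odiff k f (t + real (Suc n)))"
proof (induction p arbitrary: f)
  case (Suc p)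
  have shift: "odiff k (odiff (Suc 0) f) = odiff (Suc k) f" for k
    using odiff_add[of k 1 f] by simp
  have "(\<Sum>s<Suc n. weight a s * odiff (Suc p) f (t + real s)) =
     (\<Sum>s<Suc n. weight (a - real p) s * odiff 1 f (t + real s))
     - (\<Sum>k<p. weight (a - real p + real k + 1) n * odiff (Suc k) f (t + real (Suc n)))"
    using Suc[of "odiff 1 f"] odiff_add[of p 1 f] by (simp add: shift)
  also have "(\<Sum>s<Suc n. weight (a - real p) s * odiff 1 f (t + real s)) =
     (\<Sum>s<Suc n. weight (a - real p - 1) s * f (t + real s))
     - weight (a - real p) n * f (t + real (Suc n))"
    using sum_by_parts_once[of "a - real p" f t n] by (simp add: odiff_Suc add.assoc)
  also have "(\<Sum>k<Suc p. weight (a - real (Suc p) + real k + 1) n * odiff k f (t + real (Suc n)))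
     = weight (a - real p) n * f (t + real (Suc n)) +
       (\<Sum>k<p. weight (a - real p + real k + 1) n * odiff (Suc k) f (t + real (Suc n)))"
    by (subst sum.lessThan_Suc_shift) (simp add: algebra_simps)
  ultimately show ?case
    by (simp add: algebra_simps)
qed simp

definition wsum :: "real \<Rightarrow> real \<Rightarrow> (real \<Rightarrow> real) \<Rightarrow> real \<Rightarrow> real" where
  "wsum c a g x = (\<Sum>j<nat \<lfloor>c - x\<rfloor>. weight a j * g (x + real j))"

lemma wsum_step: "wsum c a g x - wsum c a g (x + 1) = wsum c (a - 1) g x"
proof -
  have range: "nat \<lfloor>c - (x + 1)\<rfloor> = nat \<lfloor>c - x\<rfloor> - 1"
    using floor_diff_one[of "c - x"] by (simp add: algebra_simps nat_diff_distrib)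
  show ?thesis
  proof (cases "nat \<lfloor>c - x\<rfloor>")
    case 0
    then show ?thesis using range by (simp add: wsum_def)
  next
    case (Suc M)
    have "wsum c a g x = g x + (\<Sum>j<M. weight a (Suc j) * g (x + 1 + real j))"
      "wsum c (a - 1) g x = g x + (\<Sum>j<M. weight (a - 1) (Suc j) * g (x + 1 + real j))"
      unfolding wsum_def Suc by (subst sum.lessThan_Suc_shift; simp add: algebra_simps)+
    moreover have "wsum c a g (x + 1) = (\<Sum>j<M. weight a j * g (x + 1 + real j))"
      unfolding wsum_def range Suc by simp
    ultimately show ?thesis
      by (simp add: weight_pascal[symmetric] left_diff_distrib sum_subtractf)
  qed
qed

lemma odiff_wsum: "odiff i (wsum c a g) x = wsum c (a - real i) g x"
proof (induction i arbitrary: x)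
  case (Suc i)
  show ?case
    using wsum_step[of c "a - real i" g x] by (simp add: odiff_Suc Suc algebra_simps)
qed simp

lemma nsum_eq_wsum: "\<gamma> \<notin> \<int>\<^sub>\<le>\<^sub>0 \<Longrightarrow> nsum c \<gamma> g = wsum c \<gamma> g"
  unfolding nsum_def wsum_def fun_eq_iff
  by (simp add: sum_distrib_left mult.assoc[symmetric] rGamma_rising_weight)

text \<open>For a negative non-integral order the difference of order -a is n differences
  of a sum of positive order n + a, which by odiff_wsum is again a tail sum.\<close>
lemma nabla_op_eq_wsum:
  assumes "\<alpha> \<notin> \<int>\<^sub>\<le>\<^sub>0"
  shows "nabla_op c \<alpha> g = wsum c \<alpha> g"
proof (cases "\<alpha> > 0")
  case True
  then show ?thesis using assms by (simp add: nabla_op_def nsum_eq_wsum)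
next
  case False
  define n where "n = nat \<lceil>- \<alpha>\<rceil>"
  have "\<alpha> \<noteq> - real n"
    using assms by auto
  moreover have "real n \<ge> - \<alpha>"
    unfolding n_def by linarith
  ultimately have pos: "real n + \<alpha> > 0"
    by simp
  then have "real n + \<alpha> \<notin> \<int>\<^sub>\<le>\<^sub>0"
    by (meson nonpos_Ints_nonpos not_le)
  moreover have "nabla_op c \<alpha> g = odiff n (nsum c (real n + \<alpha>) g)"
    using False pos assms by (auto simp: nabla_op_def ndiff_def n_def Let_def)
  ultimately show ?thesis
    by (simp add: fun_eq_iff nsum_eq_wsum odiff_wsum)
qed

lemma nabla_op_nonpos_int: "nabla_op c (- real n) g = odiff n g"
  by (cases "n = 0") (simp_all add: nabla_op_def ndiff_def)

text \<open>Orders -n: the boundary terms vanish since every rGamma factor sits at a pole.\<close>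
lemma commute_nonpos_int_order:
  assumes "\<alpha> \<in> \<int>\<^sub>\<le>\<^sub>0"
  shows "nabla_op c \<alpha> (odiff p f) t = odiff p (nabla_op c \<alpha> f) t
           - (\<Sum>k<p. rising (c - t) (\<alpha> - real p + real k)
                        * rGamma (\<alpha> + real k - real p + 1) * odiff k f c)"
proof -
  obtain n where n: "\<alpha> = - real n"
    using assms by (auto elim!: nonpos_Ints_cases')
  have "rGamma (\<alpha> + real k - real p + 1) = 0" if "k < p" for k
  proof -
    have "\<alpha> + real k - real p + 1 = - real (n + p - k - 1)"
      using that n by (simp add: of_nat_diff)
    then show ?thesis by simp
  qed
  then show ?thesis
    by (simp add: n nabla_op_nonpos_int odiff_commute)
qed

text \<open>The boundary weights at the endpoint are the rising factorials of the theorem;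
  when the order is not a non-positive integer and p \<le> n + 1, every pole of rGamma
  met here is compensated by a vanishing Pochhammer symbol.\<close>
lemma boundary_weight:
  assumes "\<alpha> \<notin> \<int>\<^sub>\<le>\<^sub>0" and "p \<le> Suc n"
  shows "rising (real (Suc n)) (\<alpha> - real p + real k) * rGamma (\<alpha> + real k - real p + 1)
           = weight (\<alpha> - real p + real k + 1) n"
proof -
  define a where "a = \<alpha> - real p + real k + 1"
  have "a \<notin> \<int>\<^sub>\<le>\<^sub>0 \<or> pochhammer a n = 0"
  proof (cases "a \<in> \<int>\<^sub>\<le>\<^sub>0")
    case True
    then obtain r where r: "a = - real r"
      by (auto elim!: nonpos_Ints_cases')
    have "r < n"
    proof (rule ccontr)
      assume "\<not> r < n"
      then have "\<alpha> = - real (r + k + 1 - p)"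
        using r assms(2) unfolding a_def by (simp add: of_nat_diff)
      then show False using assms(1) by simp
    qed
    then show ?thesis using r by (auto simp: pochhammer_eq_0_iff)
  qed simp
  then show ?thesis
    using rGamma_rising_weight[of a n] by (simp add: a_def algebra_simps)
qed

lemma nabla_odiff_commute:
  assumes ct: "c - t = real (Suc n)" and "p \<le> Suc n"
  shows "nabla_op c \<alpha> (odiff p f) t = odiff p (nabla_op c \<alpha> f) t
           - (\<Sum>k<p. rising (c - t) (\<alpha> - real p + real k)
                        * rGamma (\<alpha> + real k - real p + 1) * odiff k f c)"
proof (cases "\<alpha> \<in> \<int>\<^sub>\<le>\<^sub>0")
  case True
  then show ?thesis by (rule commute_nonpos_int_order)
next
  case False
  have range: "nat \<lfloor>c - t\<rfloor> = Suc n" and endpoint: "t + real (Suc n) = c"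
    using ct by simp_all
  have "nabla_op c \<alpha> (odiff p f) t = (\<Sum>s<Suc n. weight \<alpha> s * odiff p f (t + real s))"
    using nabla_op_eq_wsum[OF False] range by (simp add: wsum_def)
  also have "\<dots> = (\<Sum>s<Suc n. weight (\<alpha> - real p) s * f (t + real s))
       - (\<Sum>k<p. weight (\<alpha> - real p + real k + 1) n * odiff k f (t + real (Suc n)))"
    by (rule sum_by_parts)
  also have "(\<Sum>s<Suc n. weight (\<alpha> - real p) s * f (t + real s)) = odiff p (nabla_op c \<alpha> f) t"
    using nabla_op_eq_wsum[OF False] range by (simp add: odiff_wsum wsum_def)
  finally show ?thesis
    using boundary_weight[OF False assms(2)] unfolding endpoint by (simp add: ct)
qed

theorem theorem2p12:
  fixes \<alpha> b t :: real and p :: nat and f :: "real \<Rightarrow> real"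
  assumes "p > 0"
    and "t \<in> latt (b - 2 * real p + 1)"
  shows "nabla_op (b - real p + 1) \<alpha> (odiff p f) t =
           odiff p (nabla_op (b - real p + 1) \<alpha> f) t
           - (\<Sum>k<p. rising (b - real p + 1 - t) (\<alpha> - real p + real k)
                        * rGamma (\<alpha> + real k - real p + 1)
                        * odiff k f (b - real p + 1))"
proof -
  obtain m where "t = b - 2 * real p + 1 - real m"
    using assms(2) unfolding latt_def by auto
  then have "(b - real p + 1) - t = real (Suc (p + m - 1))"
    using assms(1) by simp
  moreover have "p \<le> Suc (p + m - 1)"
    by simp
  ultimately show ?thesis
    by (rule nabla_odiff_commute)
qed

end
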